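(* Let $K$ be a field, $I\subset R=K[x_1,\ldots,x_n]$ a monomial ideal and $W$ a weight over $R$. Then $I$ has the copersistence property if and only if the weighted ideal $I_W$ has the copersistence property.
   Context: An ideal $I$ in a commutative Noetherian ring $R$ has the copersistence property if $\mathrm{Ass}_R(R/I^k)\supseteq\mathrm{Ass}_R(R/I^{k+1})$ for all $k\ge1$. A weight over $R=K[x_1,\ldots,x_n]$ is a function $W:\{x_1,\ldots,x_n\}\to\mathbb{N}$ (positive integers); write $w_i=W(x_i)$. For a monomial ideal $I$, the weighted ideal $I_W$ is the ideal generated by $\{h(u): u \text{ a minimal monomial generator of } I\}$, where $h:R\to R$ is the $K$-algebra homomorphism with $h(x_i)=x_i^{w_i}$. *)

theory Defs
  imports Main "HOL-Library.Poly_Mapping"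
begin

definition is_ideal :: "'a::comm_ring_1 set \<Rightarrow> bool" where
  "is_ideal I \<longleftrightarrow> 0 \<in> I \<and> (\<forall>a\<in>I. \<forall>b\<in>I. a + b \<in> I) \<and> (\<forall>r. \<forall>a\<in>I. r * a \<in> I)"

definition ideal_gen :: "'a::comm_ring_1 set \<Rightarrow> 'a set" where
  "ideal_gen S = \<Inter>{J. is_ideal J \<and> S \<subseteq> J}"

definition ideal_prod :: "'a::comm_ring_1 set \<Rightarrow> 'a set \<Rightarrow> 'a set" where
  "ideal_prod I J = ideal_gen {a * b | a b. a \<in> I \<and> b \<in> J}"

primrec ideal_pow :: "'a::comm_ring_1 set \<Rightarrow> nat \<Rightarrow> 'a set" where
  "ideal_pow I 0 = UNIV"
| "ideal_pow I (Suc k) = ideal_prod (ideal_pow I k) I"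

definition is_prime_ideal :: "'a::comm_ring_1 set \<Rightarrow> bool" where
  "is_prime_ideal P \<longleftrightarrow> is_ideal P \<and> P \<noteq> UNIV \<and> (\<forall>a b. a * b \<in> P \<longrightarrow> a \<in> P \<or> b \<in> P)"

text \<open>Ass_R(R/J): prime ideals that are the annihilator (J : f) of some element f + J of R/J.\<close>
definition Ass :: "'a::comm_ring_1 set \<Rightarrow> 'a set set" where
  "Ass J = {P. is_prime_ideal P \<and> (\<exists>f. P = {r. r * f \<in> J})}"

definition copersistent :: "'a::comm_ring_1 set \<Rightarrow> bool" where
  "copersistent I \<longleftrightarrow> (\<forall>k\<ge>1. Ass (ideal_pow I (k + 1)) \<subseteq> Ass (ideal_pow I k))"

type_synonym ('v, 'k) mpoly = "('v \<Rightarrow>\<^sub>0 nat) \<Rightarrow>\<^sub>0 'k"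

definition monomials :: "('v, 'k::field) mpoly set" where
  "monomials = {Poly_Mapping.single a 1 | a. True}"

definition is_monomial_ideal :: "('v, 'k::field) mpoly set \<Rightarrow> bool" where
  "is_monomial_ideal I \<longleftrightarrow> is_ideal I \<and> I = ideal_gen (I \<inter> monomials)"

definition min_mon_gens :: "('v, 'k::field) mpoly set \<Rightarrow> ('v \<Rightarrow>\<^sub>0 nat) set" where
  "min_mon_gens I = {a. Poly_Mapping.single a 1 \<in> I \<and>
     (\<forall>b. Poly_Mapping.single b 1 \<in> I \<and> (\<forall>v. Poly_Mapping.lookup b v \<le> Poly_Mapping.lookup a v) \<longrightarrow> b = a)}"

text \<open>Weight h: x_v \<mapsto> x_v^(w v) acting on exponent vectors.\<close>
definition weight_exp :: "('v \<Rightarrow> nat) \<Rightarrow> ('v \<Rightarrow>\<^sub>0 nat) \<Rightarrow> ('v \<Rightarrow>\<^sub>0 nat)" where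
  "weight_exp w a = Abs_poly_mapping (\<lambda>v. w v * Poly_Mapping.lookup a v)"

definition weighted_ideal :: "('v \<Rightarrow> nat) \<Rightarrow> ('v, 'k::field) mpoly set \<Rightarrow> ('v, 'k) mpoly set" where
  "weighted_ideal w I = ideal_gen ((\<lambda>a. Poly_Mapping.single (weight_exp w a) 1) ` min_mon_gens I)"

end

(* A monomial ideal is the set of polynomials supported in an up-closed set E of exponents.
   Products of such ideals correspond to sumsets of exponent sets, and I_W corresponds to the
   up-closure of W(E), which commutes with sumsets; hence (I_W)^k = (I^k)_W.
   The associated primes of the monomial ideal with exponent set E are exactly the primes
   P_A = (x_i : i in A) such that P_A = (I : x^u) for some monomial x^u, i.e. such that the
   shifted exponent set (E - u) is the exponent set of P_A. This condition is preserved by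
   weighting in both directions: u goes to W(u) + (w_i - 1)_{i in A}, and back by componentwise
   division by w. So Ass((I_W)^k) = Ass(I^k) for every k, which is more than the claimed
   equivalence of copersistence. *)

theory Submission
  imports Defs "HOL-Library.Set_Algebras"
begin

subsection \<open>Ideals\<close>

lemma is_ideal_ideal_gen: "is_ideal (ideal_gen S)"
  unfolding ideal_gen_def is_ideal_def by auto

lemma ideal_gen_subset: "S \<subseteq> ideal_gen S"
  unfolding ideal_gen_def by auto

lemma ideal_gen_least: "is_ideal J \<Longrightarrow> S \<subseteq> J \<Longrightarrow> ideal_gen S \<subseteq> J"
  unfolding ideal_gen_def by auto

lemma ideal_gen_mono: "S \<subseteq> T \<Longrightarrow> ideal_gen S \<subseteq> ideal_gen T"
  by (meson is_ideal_ideal_gen ideal_gen_least ideal_gen_subset order_trans)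

lemma ideal_zero: "is_ideal I \<Longrightarrow> 0 \<in> I"
  unfolding is_ideal_def by auto

lemma ideal_add: "is_ideal I \<Longrightarrow> a \<in> I \<Longrightarrow> b \<in> I \<Longrightarrow> a + b \<in> I"
  unfolding is_ideal_def by auto

lemma ideal_mult_left: "is_ideal I \<Longrightarrow> a \<in> I \<Longrightarrow> r * a \<in> I"
  unfolding is_ideal_def by auto

lemma ideal_mult_right: "is_ideal I \<Longrightarrow> a \<in> I \<Longrightarrow> a * r \<in> I"
  unfolding is_ideal_def by (metis mult.commute)

lemma ideal_diff: "is_ideal I \<Longrightarrow> a \<in> I \<Longrightarrow> b \<in> I \<Longrightarrow> a - b \<in> I"
  using ideal_add[of I a "- b"] ideal_mult_left[of I b "- 1"] by simp

lemma ideal_sum: "is_ideal I \<Longrightarrow> (\<And>x. x \<in> S \<Longrightarrow> f x \<in> I) \<Longrightarrow> sum f S \<in> I"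
  by (induction S rule: infinite_finite_induct) (auto intro: ideal_zero ideal_add)

lemma prime_ideal_one_notin: "is_prime_ideal P \<Longrightarrow> 1 \<notin> P"
  unfolding is_prime_ideal_def using ideal_mult_left[of P 1] by auto

subsection \<open>Up-closed sets of exponents\<close>

definition up_closed :: "'a::plus set \<Rightarrow> bool" where
  "up_closed E \<longleftrightarrow> (\<forall>a\<in>E. \<forall>c. a + c \<in> E)"

lemma up_closed_UNIV: "up_closed UNIV"
  by (simp add: up_closed_def)

lemma up_closed_plus_UNIV: "up_closed (S + (UNIV :: 'a::semigroup_add set))"
  unfolding up_closed_def by (auto elim!: set_plus_elim) (metis UNIV_I add.assoc set_plus_intro)

lemma up_closed_set_plus: "up_closed F \<Longrightarrow> up_closed (E + (F :: 'a::semigroup_add set))"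
  unfolding up_closed_def by (auto elim!: set_plus_elim) (metis add.assoc set_plus_intro)

lemma up_closed_plus_UNIV_eq:
  assumes "up_closed E"
  shows "E + (UNIV :: 'a::monoid_add set) = E"
proof
  show "E + UNIV \<subseteq> E" using assms unfolding up_closed_def by (auto elim!: set_plus_elim)
  show "E \<subseteq> E + UNIV" using set_plus_intro[of _ E 0 UNIV] by auto
qed

text \<open>Exponent set of the \<open>k\<close>-th power of a monomial ideal. The base case is \<open>UNIV\<close>, not \<open>{0}\<close>,
  because \<open>ideal_pow I 0\<close> is the whole ring.\<close>
primrec sumset_power :: "'a::plus set \<Rightarrow> nat \<Rightarrow> 'a set" where
  "sumset_power E 0 = UNIV"
| "sumset_power E (Suc k) = sumset_power E k + E"

lemma up_closed_sumset_power: "up_closed E \<Longrightarrow> up_closed (sumset_power (E :: 'a::semigroup_add set) k)"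
  by (induction k) (simp_all add: up_closed_UNIV up_closed_set_plus)

lemma image_set_plus:
  assumes "\<And>a b. h (a + b) = h a + h b"
  shows "h ` (A + B) = h ` A + h ` B"
proof
  show "h ` (A + B) \<subseteq> h ` A + h ` B"
    by (auto elim!: set_plus_elim simp: assms intro!: set_plus_intro)
  show "h ` A + h ` B \<subseteq> h ` (A + B)"
    by (auto elim!: set_plus_elim simp flip: assms intro!: imageI set_plus_intro)
qed

subsection \<open>Monomial ideals as sets of exponents\<close>

abbreviation monom :: "('v \<Rightarrow>\<^sub>0 nat) \<Rightarrow> ('v, 'k::comm_ring_1) mpoly" where
  "monom a \<equiv> Poly_Mapping.single a 1"

definition supp_ideal :: "('v \<Rightarrow>\<^sub>0 nat) set \<Rightarrow> ('v, 'k::comm_ring_1) mpoly set" where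
  "supp_ideal E = {f. Poly_Mapping.keys f \<subseteq> E}"

lemma supp_ideal_UNIV: "supp_ideal UNIV = UNIV"
  by (simp add: supp_ideal_def)

lemma is_ideal_supp_ideal:
  fixes E :: "('v \<Rightarrow>\<^sub>0 nat) set"
  assumes "up_closed E"
  shows "is_ideal (supp_ideal E :: ('v, 'k::comm_ring_1) mpoly set)"
proof -
  have "Poly_Mapping.keys (r * f) \<subseteq> E" if "Poly_Mapping.keys f \<subseteq> E" for r f :: "('v, 'k) mpoly"
  proof
    fix x assume "x \<in> Poly_Mapping.keys (r * f)"
    then obtain p q where "q \<in> Poly_Mapping.keys f" "x = p + q"
      using keys_mult[of r f] by blast
    with that assms show "x \<in> E"
      unfolding up_closed_def by (metis add.commute subsetD)
  qed
  moreover have "Poly_Mapping.keys (f + g) \<subseteq> E"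
    if "Poly_Mapping.keys f \<subseteq> E" "Poly_Mapping.keys g \<subseteq> E" for f g :: "('v, 'k) mpoly"
    using that keys_add[of f g] by blast
  ultimately show ?thesis
    unfolding is_ideal_def supp_ideal_def by simp
qed

lemma poly_mapping_sum_single:
  "f = (\<Sum>a\<in>Poly_Mapping.keys f. Poly_Mapping.single a (Poly_Mapping.lookup f a))"
proof (rule poly_mapping_eqI)
  fix k
  have "(\<Sum>a\<in>Poly_Mapping.keys f. Poly_Mapping.lookup (Poly_Mapping.single a (Poly_Mapping.lookup f a)) k)
      = (\<Sum>a\<in>Poly_Mapping.keys f. if a = k then Poly_Mapping.lookup f a else 0)"
    by (intro sum.cong) (auto simp: lookup_single when_def)
  also have "\<dots> = Poly_Mapping.lookup f k"
    by (simp add: sum.delta' in_keys_iff)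
  finally show "Poly_Mapping.lookup f k
      = Poly_Mapping.lookup (\<Sum>a\<in>Poly_Mapping.keys f. Poly_Mapping.single a (Poly_Mapping.lookup f a)) k"
    by (simp add: lookup_sum)
qed

lemma mem_ideal_if_monoms:
  fixes f :: "('v, 'k::comm_ring_1) mpoly"
  assumes "is_ideal I" "\<And>a. a \<in> Poly_Mapping.keys f \<Longrightarrow> monom a \<in> I"
  shows "f \<in> I"
proof -
  have "Poly_Mapping.single a (Poly_Mapping.lookup f a) \<in> I" if "a \<in> Poly_Mapping.keys f" for a
  proof -
    have "Poly_Mapping.single a (Poly_Mapping.lookup f a)
        = Poly_Mapping.single 0 (Poly_Mapping.lookup f a) * (monom a :: ('v, 'k) mpoly)"
      by (simp add: mult_single)
    then show ?thesis using ideal_mult_left[OF assms(1) assms(2)[OF that]] by simp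
  qed
  then show ?thesis
    by (subst poly_mapping_sum_single) (rule ideal_sum[OF assms(1)])
qed

lemma ideal_gen_monoms:
  "ideal_gen (monom ` S) = (supp_ideal (S + UNIV) :: ('v, 'k::comm_ring_1) mpoly set)"
  (is "?L = ?R")
proof
  have "monom s \<in> supp_ideal (S + UNIV)" if "s \<in> S" for s
    using set_plus_intro[OF that UNIV_I, of 0] by (simp add: supp_ideal_def)
  then show "?L \<subseteq> ?R"
    by (intro ideal_gen_least is_ideal_supp_ideal up_closed_plus_UNIV) blast
  show "?R \<subseteq> ?L"
  proof
    fix f assume f: "f \<in> ?R"
    show "f \<in> ?L"
    proof (rule mem_ideal_if_monoms[OF is_ideal_ideal_gen])
      fix a assume "a \<in> Poly_Mapping.keys f"
      then obtain s c where "s \<in> S" "a = s + c"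
        using f unfolding supp_ideal_def by (auto elim!: set_plus_elim)
      then have "monom a = monom c * (monom s :: ('v, 'k) mpoly)"
        by (simp add: mult_single add.commute)
      moreover have "monom s \<in> ?L"
        using \<open>s \<in> S\<close> by (intro subsetD[OF ideal_gen_subset] imageI)
      ultimately show "monom a \<in> ?L"
        by (simp add: ideal_mult_left[OF is_ideal_ideal_gen])
    qed
  qed
qed

lemma ideal_prod_supp_ideal:
  assumes "up_closed F"
  shows "ideal_prod (supp_ideal E) (supp_ideal F) = (supp_ideal (E + F) :: ('v, 'k::comm_ring_1) mpoly set)"
    (is "?L = ?R")
proof
  have "p * q \<in> supp_ideal (E + F)" if "p \<in> supp_ideal E" "q \<in> supp_ideal F" for p q :: "('v, 'k) mpoly"
  proof -
    have "Poly_Mapping.keys (p * q) \<subseteq> {a + b | a b. a \<in> Poly_Mapping.keys p \<and> b \<in> Poly_Mapping.keys q}"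
      by (rule keys_mult)
    also have "\<dots> \<subseteq> E + F"
      using that unfolding supp_ideal_def by (blast intro: set_plus_intro)
    finally show ?thesis by (simp add: supp_ideal_def)
  qed
  then show "?L \<subseteq> ?R"
    unfolding ideal_prod_def
    by (intro ideal_gen_least is_ideal_supp_ideal up_closed_set_plus assms) auto
  have "?R = ideal_gen (monom ` (E + F))"
    by (simp add: ideal_gen_monoms up_closed_plus_UNIV_eq up_closed_set_plus assms)
  also have "\<dots> \<subseteq> ?L"
    unfolding ideal_prod_def
  proof (intro ideal_gen_mono image_subsetI)
    fix x assume "x \<in> E + F"
    then obtain a b where "a \<in> E" "b \<in> F" "x = a + b"
      by (rule set_plus_elim)
    then show "monom x \<in> {p * q | p q :: ('v, 'k) mpoly. p \<in> supp_ideal E \<and> q \<in> supp_ideal F}"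
      by (intro CollectI exI[of _ "monom a"] exI[of _ "monom b"]) (simp add: mult_single supp_ideal_def)
  qed
  finally show "?R \<subseteq> ?L" .
qed

lemma ideal_pow_supp_ideal:
  "up_closed E \<Longrightarrow> ideal_pow (supp_ideal E) k = supp_ideal (sumset_power E k)"
  by (induction k) (simp_all add: supp_ideal_UNIV ideal_prod_supp_ideal)

lemma up_closed_monom_exps:
  assumes "is_ideal I"
  shows "up_closed {a. monom a \<in> I}"
  unfolding up_closed_def
  using ideal_mult_left[OF assms, of "monom _" "monom _"] by (simp add: mult_single add.commute)

lemma monomial_ideal_eq_supp_ideal:
  assumes "is_monomial_ideal I"
  shows "I = supp_ideal {a. monom a \<in> I}"
proof -
  have "is_ideal I" and I: "I = ideal_gen (I \<inter> monomials)"
    using assms unfolding is_monomial_ideal_def by auto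
  have "I \<inter> monomials = monom ` {a. monom a \<in> I}"
    unfolding monomials_def by auto
  with I show ?thesis
    by (simp add: ideal_gen_monoms up_closed_plus_UNIV_eq up_closed_monom_exps[OF \<open>is_ideal I\<close>])
qed

subsection \<open>No zero divisors\<close>

lemma lookup_mult_unique_decomp:
  fixes f g :: "'a::monoid_add \<Rightarrow>\<^sub>0 'b::semiring_0"
  assumes "\<And>p q. p \<in> Poly_Mapping.keys f \<Longrightarrow> q \<in> Poly_Mapping.keys g \<Longrightarrow> p + q = a + b \<Longrightarrow> p = a \<and> q = b"
  shows "Poly_Mapping.lookup (f * g) (a + b) = Poly_Mapping.lookup f a * Poly_Mapping.lookup g b"
proof -
  have "(Poly_Mapping.lookup f l * Poly_Mapping.lookup g q when a + b = l + q)
      = (Poly_Mapping.lookup f l * Poly_Mapping.lookup g q when q = b when l = a)" for l q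
    using assms[of l q]
    by (cases "Poly_Mapping.lookup f l = 0"; cases "Poly_Mapping.lookup g q = 0") (auto simp: when_def in_keys_iff)
  then show ?thesis
    by (simp add: lookup_mult Sum_any_right_distrib mult_when Sum_any_when_independent)
qed

lemma lookup_mult_leading:
  fixes f g :: "'a::cancel_comm_monoid_add \<Rightarrow>\<^sub>0 'b::semiring_0"
    and \<psi> :: "'a \<Rightarrow> 'c::linordered_cancel_ab_semigroup_add"
  assumes "inj \<psi>" and \<psi>_add: "\<And>a b. \<psi> (a + b) = \<psi> a + \<psi> b"
    and "\<And>p. p \<in> Poly_Mapping.keys f \<Longrightarrow> \<psi> p \<le> \<psi> a"
    and "\<And>q. q \<in> Poly_Mapping.keys g \<Longrightarrow> \<psi> q \<le> \<psi> b"
  shows "Poly_Mapping.lookup (f * g) (a + b) = Poly_Mapping.lookup f a * Poly_Mapping.lookup g b"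
proof (rule lookup_mult_unique_decomp)
  fix p q assume p: "p \<in> Poly_Mapping.keys f" and q: "q \<in> Poly_Mapping.keys g" and "p + q = a + b"
  then have sum: "\<psi> p + \<psi> q = \<psi> a + \<psi> b"
    by (simp flip: \<psi>_add)
  have "\<psi> p = \<psi> a"
  proof (rule ccontr)
    assume "\<psi> p \<noteq> \<psi> a"
    with assms(3)[OF p] assms(4)[OF q] have "\<psi> p + \<psi> q < \<psi> a + \<psi> b"
      by (simp add: add_less_le_mono)
    with sum show False by simp
  qed
  with \<open>p + q = a + b\<close> \<open>inj \<psi>\<close> show "p = a \<and> q = b"
    by (simp add: inj_eq)
qed

lemma mpoly_mult_nonzero:
  fixes f g :: "('v::finite, 'k::idom) mpoly"
  assumes "f \<noteq> 0" "g \<noteq> 0"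
  shows "f * g \<noteq> 0"
proof -
  obtain \<iota> :: "'v \<Rightarrow> nat" where "inj \<iota>"
    using finite_imp_inj_to_nat_seg[of "UNIV :: 'v set"] by auto
  txt \<open>\<open>\<psi>\<close> embeds the exponent monoid into \<open>nat \<Rightarrow>\<^sub>0 nat\<close>, which the library orders linearly
    (lexicographically) and compatibly with addition; leading terms then exist.\<close>
  define \<psi> :: "('v \<Rightarrow>\<^sub>0 nat) \<Rightarrow> (nat \<Rightarrow>\<^sub>0 nat)"
    where "\<psi> a = (\<Sum>v\<in>UNIV. Poly_Mapping.single (\<iota> v) (Poly_Mapping.lookup a v))" for a
  have "Poly_Mapping.lookup (\<psi> a) (\<iota> v) = Poly_Mapping.lookup a v" for a v
    using \<open>inj \<iota>\<close> by (simp add: \<psi>_def lookup_sum lookup_single when_def inj_eq)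
  then have "inj \<psi>"
    by (metis injI poly_mapping_eqI)
  have \<psi>_add: "\<psi> (a + b) = \<psi> a + \<psi> b" for a b
    by (simp add: \<psi>_def lookup_add single_add sum.distrib)
  have "\<exists>m\<in>Poly_Mapping.keys h. \<forall>p\<in>Poly_Mapping.keys h. \<psi> p \<le> \<psi> m" if "h \<noteq> 0" for h :: "('v, 'k) mpoly"
  proof -
    have "Max (\<psi> ` Poly_Mapping.keys h) \<in> \<psi> ` Poly_Mapping.keys h"
      using that by (intro Max_in) auto
    then obtain m where "Max (\<psi> ` Poly_Mapping.keys h) = \<psi> m" "m \<in> Poly_Mapping.keys h"
      by (rule imageE)
    moreover have "\<psi> p \<le> Max (\<psi> ` Poly_Mapping.keys h)" if "p \<in> Poly_Mapping.keys h" for p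
      using that by (intro Max_ge) auto
    ultimately show ?thesis by metis
  qed
  then obtain a b where "a \<in> Poly_Mapping.keys f" "\<forall>p\<in>Poly_Mapping.keys f. \<psi> p \<le> \<psi> a"
    and "b \<in> Poly_Mapping.keys g" "\<forall>q\<in>Poly_Mapping.keys g. \<psi> q \<le> \<psi> b"
    using assms by meson
  with lookup_mult_leading[OF \<open>inj \<psi>\<close> \<psi>_add, of f a g b]
  have "Poly_Mapping.lookup (f * g) (a + b) \<noteq> 0"
    by (simp add: in_keys_iff)
  then show ?thesis by auto
qed

lemma lookup_monom_mult:
  "Poly_Mapping.lookup (monom m * f) (m + a) = Poly_Mapping.lookup (f :: ('v, 'k::comm_ring_1) mpoly) a"
  by (subst lookup_mult_unique_decomp) auto

lemma keys_monom_mult: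
  "Poly_Mapping.keys (monom m * (f :: ('v, 'k::comm_ring_1) mpoly)) = (+) m ` Poly_Mapping.keys f"
proof
  show "Poly_Mapping.keys (monom m * f) \<subseteq> (+) m ` Poly_Mapping.keys f"
    using keys_mult[of "monom m" f] by auto
  show "(+) m ` Poly_Mapping.keys f \<subseteq> Poly_Mapping.keys (monom m * f)"
    by (auto simp: in_keys_iff lookup_monom_mult)
qed

lemma card_keys_cancel_term:
  fixes f :: "('v, 'k::comm_ring_1) mpoly"
  assumes "b \<in> Poly_Mapping.keys f"
  shows "card (Poly_Mapping.keys (monom a * f - Poly_Mapping.single (a + b) (Poly_Mapping.lookup f b)))
    < card (Poly_Mapping.keys f)"
proof -
  let ?h = "Poly_Mapping.single (a + b) (Poly_Mapping.lookup f b) :: ('v, 'k) mpoly"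
  have "Poly_Mapping.lookup (monom a * f - ?h) (a + b) = 0"
    by (simp add: lookup_minus lookup_monom_mult)
  then have "Poly_Mapping.keys (monom a * f - ?h) \<subset> Poly_Mapping.keys (monom a * f)"
    using keys_add[of "monom a * f" "- ?h"] assms by (auto simp: keys_monom_mult in_keys_iff)
  then have "card (Poly_Mapping.keys (monom a * f - ?h)) < card (Poly_Mapping.keys (monom a * f))"
    by (simp add: psubset_card_mono)
  also have "\<dots> = card (Poly_Mapping.keys f)"
    by (simp add: keys_monom_mult card_image)
  finally show ?thesis .
qed

lemma mult_monom_mem_supp_ideal_iff:
  "(f :: ('v, 'k::comm_ring_1) mpoly) * monom m \<in> supp_ideal E \<longleftrightarrow> (\<forall>a\<in>Poly_Mapping.keys f. m + a \<in> E)"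
  by (auto simp: supp_ideal_def mult.commute[of f] keys_monom_mult)

lemma colon_diff_mem:
  assumes "is_ideal J" "h \<in> J"
  shows "{r. r * (f - h) \<in> J} = {r. r * f \<in> J}"
proof -
  have "r * (f - h) \<in> J \<longleftrightarrow> r * f \<in> J" for r
    using ideal_diff[OF assms(1) _ ideal_mult_left[OF assms], of "r * f" r]
      ideal_add[OF assms(1) _ ideal_mult_left[OF assms], of "r * (f - h)" r]
    by (auto simp: algebra_simps)
  then show ?thesis by blast
qed

lemma prime_colon_mult:
  assumes "is_prime_ideal P" "P = {r. r * f \<in> J}" "g \<notin> P"
  shows "P = {r. r * (g * f) \<in> J}"
proof -
  have "r * g \<in> P \<longleftrightarrow> r \<in> P" for r
    using assms(1,3) ideal_mult_right[of P r g] unfolding is_prime_ideal_def by blast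
  then show ?thesis
    using assms(2) by (auto simp: mult.assoc)
qed

subsection \<open>Monomial primes\<close>

definition prime_exps :: "'v set \<Rightarrow> ('v \<Rightarrow>\<^sub>0 nat) set" where
  "prime_exps A = {a. Poly_Mapping.keys a \<inter> A \<noteq> {}}"

text \<open>The ideal \<open>(x\<^sub>i : i \<in> A)\<close>.\<close>
definition monomial_prime :: "'v set \<Rightarrow> ('v, 'k::comm_ring_1) mpoly set" where
  "monomial_prime A = supp_ideal (prime_exps A)"

lemma keys_add_nat: "Poly_Mapping.keys (a + b) = Poly_Mapping.keys a \<union> Poly_Mapping.keys (b :: 'a \<Rightarrow>\<^sub>0 nat)"
  by (auto simp: in_keys_iff lookup_add)

lemma prime_exps_add_iff: "a + b \<in> prime_exps A \<longleftrightarrow> a \<in> prime_exps A \<or> b \<in> prime_exps A"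
  by (auto simp: prime_exps_def keys_add_nat)

lemma single_mem_prime_exps_iff: "n \<noteq> 0 \<Longrightarrow> Poly_Mapping.single i n \<in> prime_exps A \<longleftrightarrow> i \<in> A"
  by (simp add: prime_exps_def)

lemma zero_notin_prime_exps: "0 \<notin> prime_exps A"
  by (simp add: prime_exps_def)

lemma sum_mem_prime_exps_iff:
  "finite U \<Longrightarrow> sum c U \<in> prime_exps A \<longleftrightarrow> (\<exists>u\<in>U. c u \<in> prime_exps A)"
  by (induction U rule: finite_induct) (simp_all add: prime_exps_add_iff zero_notin_prime_exps)

lemma up_closed_prime_exps: "up_closed (prime_exps A)"
  by (simp add: up_closed_def prime_exps_add_iff)

lemma poly_mapping_split_keys:
  fixes f :: "'a \<Rightarrow>\<^sub>0 'b::ab_group_add"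
  obtains f1 f0 where "f = f1 + f0"
    "Poly_Mapping.keys f1 = Poly_Mapping.keys f \<inter> S" "Poly_Mapping.keys f0 = Poly_Mapping.keys f - S"
proof
  define f1 where "f1 = Abs_poly_mapping (\<lambda>k. Poly_Mapping.lookup f k when k \<in> S)"
  have "finite {k. (Poly_Mapping.lookup f k when k \<in> S) \<noteq> 0}"
    by (rule finite_subset[OF _ finite_keys[of f]]) (auto simp: in_keys_iff)
  then have lookup_f1: "Poly_Mapping.lookup f1 k = (Poly_Mapping.lookup f k when k \<in> S)" for k
    by (simp add: f1_def)
  show "f = f1 + (f - f1)" by simp
  show "Poly_Mapping.keys f1 = Poly_Mapping.keys f \<inter> S"
    by (auto simp: in_keys_iff lookup_f1)
  have "Poly_Mapping.lookup (f - f1) k = (Poly_Mapping.lookup f k when k \<notin> S)" for k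
    by (simp add: lookup_minus lookup_f1 when_def)
  then show "Poly_Mapping.keys (f - f1) = Poly_Mapping.keys f - S"
    by (auto simp: in_keys_iff)
qed

lemma is_prime_monomial_prime:
  "is_prime_ideal (monomial_prime A :: ('v::finite, 'k::idom) mpoly set)"
  unfolding is_prime_ideal_def
proof (intro conjI allI impI)
  show ideal: "is_ideal (monomial_prime A :: ('v, 'k) mpoly set)"
    unfolding monomial_prime_def by (rule is_ideal_supp_ideal[OF up_closed_prime_exps])
  have "(1 :: ('v, 'k) mpoly) \<notin> monomial_prime A"
    by (simp add: monomial_prime_def supp_ideal_def zero_notin_prime_exps)
  then show "monomial_prime A \<noteq> (UNIV :: ('v, 'k) mpoly set)" by blast
  fix a b :: "('v, 'k) mpoly"
  assume ab: "a * b \<in> monomial_prime A"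
  obtain a1 a0 where a: "a = a1 + a0" "Poly_Mapping.keys a1 = Poly_Mapping.keys a \<inter> prime_exps A"
    "Poly_Mapping.keys a0 = Poly_Mapping.keys a - prime_exps A"
    by (rule poly_mapping_split_keys)
  obtain b1 b0 where b: "b = b1 + b0" "Poly_Mapping.keys b1 = Poly_Mapping.keys b \<inter> prime_exps A"
    "Poly_Mapping.keys b0 = Poly_Mapping.keys b - prime_exps A"
    by (rule poly_mapping_split_keys)
  have a1: "a1 \<in> monomial_prime A" and b1: "b1 \<in> monomial_prime A"
    using a(2) b(2) by (auto simp: monomial_prime_def supp_ideal_def)
  have "a0 * b0 = a * b - (a1 * b + a0 * b1)"
    by (simp add: a(1) b(1) algebra_simps)
  also have "\<dots> \<in> monomial_prime A"
    by (intro ideal_diff ideal_add ideal_mult_left ideal_mult_right ideal ab a1 b1)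
  finally have "Poly_Mapping.keys (a0 * b0) \<subseteq> prime_exps A"
    by (simp add: monomial_prime_def supp_ideal_def)
  moreover have "Poly_Mapping.keys (a0 * b0) \<inter> prime_exps A = {}"
    using keys_mult[of a0 b0] a(3) b(3) by (auto simp: prime_exps_add_iff)
  ultimately have "Poly_Mapping.keys (a0 * b0) = {}" by blast
  then have "a0 * b0 = 0" by simp
  then have "a0 = 0 \<or> b0 = 0" using mpoly_mult_nonzero by blast
  then show "a \<in> monomial_prime A \<or> b \<in> monomial_prime A"
    using a(1) b(1) a1 b1 by auto
qed

lemma monom_mem_prime_iff:
  fixes P :: "('v::finite, 'k::comm_ring_1) mpoly set"
  assumes P: "is_prime_ideal P"
  shows "monom m \<in> P \<longleftrightarrow> m \<in> prime_exps {i. monom (Poly_Mapping.single i 1) \<in> P}"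
  (is "_ \<longleftrightarrow> m \<in> prime_exps ?A")
proof (induction "sum (Poly_Mapping.lookup m) UNIV" arbitrary: m rule: less_induct)
  case less
  have ideal: "is_ideal P" using P by (simp add: is_prime_ideal_def)
  show ?case
  proof (cases "m = 0")
    case True
    then show ?thesis using prime_ideal_one_notin[OF P] zero_notin_prime_exps by simp
  next
    case False
    then obtain i where "i \<in> Poly_Mapping.keys m" by (metis ex_in_conv keys_eq_empty)
    define m' where "m' = m - Poly_Mapping.single i 1"
    have m: "m = Poly_Mapping.single i 1 + m'"
      using \<open>i \<in> Poly_Mapping.keys m\<close>
      by (intro poly_mapping_eqI) (auto simp: m'_def in_keys_iff lookup_add lookup_minus lookup_single when_def)
    then have "sum (Poly_Mapping.lookup m') UNIV < sum (Poly_Mapping.lookup m) UNIV"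
      by (simp add: lookup_add sum.distrib lookup_single when_def)
    then have IH: "monom m' \<in> P \<longleftrightarrow> m' \<in> prime_exps ?A"
      by (rule less.hyps)
    have "monom m = monom (Poly_Mapping.single i 1) * (monom m' :: ('v, 'k) mpoly)"
      by (subst m) (simp add: mult_single)
    then have "monom m \<in> P \<longleftrightarrow> i \<in> ?A \<or> monom m' \<in> P"
      using P ideal_mult_left[OF ideal] ideal_mult_right[OF ideal] unfolding is_prime_ideal_def
      by (metis mem_Collect_eq)
    also have "\<dots> \<longleftrightarrow> m \<in> prime_exps ?A"
      by (subst m) (simp add: IH prime_exps_add_iff single_mem_prime_exps_iff)
    finally show ?thesis .
  qed
qed

lemma monomial_prime_eq_colon:
  assumes "(+) u -` E = prime_exps A"
  shows "monomial_prime A = {r :: ('v, 'k::comm_ring_1) mpoly. r * monom u \<in> supp_ideal E}"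
  unfolding monomial_prime_def mult_monom_mem_supp_ideal_iff by (auto simp: supp_ideal_def simp flip: assms)

subsection \<open>Associated primes of monomial ideals\<close>

text \<open>With \<open>U\<close> the exponents of \<open>f\<close>, this says: if \<open>(I : f)\<close> and \<open>P\<^sub>A\<close> contain the same monomials, then
  \<open>P\<^sub>A = (I : x\<^sup>u)\<close> for some \<open>u \<in> U\<close>. Otherwise every \<open>u\<close> has some \<open>c\<^sub>u \<notin> prime_exps A\<close> with
  \<open>u + c\<^sub>u \<in> E\<close>, and \<open>\<Sum>\<^sub>u c\<^sub>u\<close> would violate the hypothesis.\<close>
lemma colon_monom_witness:
  assumes "up_closed E" "finite U"
    and colon: "\<And>m. (\<forall>u\<in>U. m + u \<in> E) \<longleftrightarrow> m \<in> prime_exps A"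
  shows "\<exists>u\<in>U. (+) u -` E = prime_exps A"
proof (rule ccontr)
  assume "\<not> ?thesis"
  moreover have "prime_exps A \<subseteq> (+) u -` E" if "u \<in> U" for u
  proof
    fix m assume "m \<in> prime_exps A"
    with colon that have "m + u \<in> E" by blast
    then show "m \<in> (+) u -` E" by (simp add: add.commute)
  qed
  ultimately have "\<forall>u\<in>U. \<exists>c. u + c \<in> E \<and> c \<notin> prime_exps A"
    by blast
  then obtain c where c: "\<And>u. u \<in> U \<Longrightarrow> u + c u \<in> E \<and> c u \<notin> prime_exps A"
    by metis
  have "sum c U \<notin> prime_exps A"
    using c \<open>finite U\<close> by (simp add: sum_mem_prime_exps_iff)
  moreover have "sum c U + u \<in> E" if "u \<in> U" for u
  proof -
    have "sum c U + u = (u + c u) + sum c (U - {u})"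
      using that \<open>finite U\<close> by (simp add: sum.remove add_ac)
    then show ?thesis
      using c[OF that] \<open>up_closed E\<close> unfolding up_closed_def by simp
  qed
  ultimately show False
    using colon by blast
qed

context
  fixes E :: "('v::finite \<Rightarrow>\<^sub>0 nat) set" and P :: "('v, 'k::idom) mpoly set" and f :: "('v, 'k) mpoly"
    and A :: "'v set"
  assumes E: "up_closed E"
    and P: "is_prime_ideal P" "P = {r. r * f \<in> supp_ideal E}"
    and A: "A = {i. monom (Poly_Mapping.single i 1) \<in> P}"
begin

lemma monom_mem_colon_iff: "monom m \<in> P \<longleftrightarrow> (\<forall>a\<in>Poly_Mapping.keys f. m + a \<in> E)"
  using P(2) by (simp add: mult.commute[of "monom m"] mult_monom_mem_supp_ideal_iff add.commute)

lemma monom_mem_colon_iff_prime_exps: "monom m \<in> P \<longleftrightarrow> m \<in> prime_exps A"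
  unfolding A by (rule monom_mem_prime_iff[OF P(1)])

lemma prime_colon_witness: "\<exists>u. (+) u -` E = prime_exps A"
  using colon_monom_witness[OF E finite_keys, of f A] monom_mem_colon_iff
    monom_mem_colon_iff_prime_exps by blast

lemma monomial_prime_subset_prime_colon: "monomial_prime A \<subseteq> P"
proof
  fix r :: "('v, 'k) mpoly" assume r: "r \<in> monomial_prime A"
  have "p + q \<in> E" if "p \<in> Poly_Mapping.keys r" "q \<in> Poly_Mapping.keys f" for p q
  proof -
    have "p \<in> prime_exps A"
      using r that(1) by (auto simp: monomial_prime_def supp_ideal_def)
    then show ?thesis
      using that(2) monom_mem_colon_iff monom_mem_colon_iff_prime_exps by blast
  qed
  then have "Poly_Mapping.keys (r * f) \<subseteq> E"
    using keys_mult[of r f] by blast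
  then show "r \<in> P"
    using P(2) by (simp add: supp_ideal_def)
qed

text \<open>Multiplying \<open>f\<close> by a monomial outside \<open>P\<close> and subtracting an element of \<open>I\<close> leaves \<open>(I : f)\<close>
  unchanged. Taking the monomial from the part outside \<open>P\<^sub>A\<close> of some \<open>g \<in> P - P\<^sub>A\<close>, one term of the
  product lies in \<open>I\<close> and can be cancelled, so \<open>f\<close> gets fewer terms.\<close>
lemma prime_colon_reduce:
  assumes "\<not> P \<subseteq> monomial_prime A"
  shows "\<exists>f'. card (Poly_Mapping.keys f') < card (Poly_Mapping.keys f) \<and> P = {r. r * f' \<in> supp_ideal E}"
proof -
  have ideal: "is_ideal P" and J: "is_ideal (supp_ideal E :: ('v, 'k) mpoly set)"
    using P(1) is_ideal_supp_ideal[OF E] by (auto simp: is_prime_ideal_def)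
  obtain g where "g \<in> P" "g \<notin> monomial_prime A"
    using assms by blast
  obtain g1 g0 where g: "g = g1 + g0" "Poly_Mapping.keys g1 = Poly_Mapping.keys g \<inter> prime_exps A"
    "Poly_Mapping.keys g0 = Poly_Mapping.keys g - prime_exps A"
    by (rule poly_mapping_split_keys)
  have "g1 \<in> monomial_prime A"
    using g(2) by (auto simp: monomial_prime_def supp_ideal_def)
  then have "g0 \<noteq> 0" and "g0 \<in> P"
    using g(1) \<open>g \<notin> monomial_prime A\<close> ideal_diff[OF ideal \<open>g \<in> P\<close>, of g1]
      monomial_prime_subset_prime_colon by auto
  moreover have "f \<noteq> 0"
    using P prime_ideal_one_notin[OF P(1)] ideal_zero[OF J] by auto
  ultimately obtain x where x: "x \<in> Poly_Mapping.keys (g0 * f)"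
    by (metis ex_in_conv keys_eq_empty mpoly_mult_nonzero)
  then obtain a b where ab: "a \<in> Poly_Mapping.keys g0" "b \<in> Poly_Mapping.keys f" "x = a + b"
    using keys_mult[of g0 f] by blast
  have "x \<in> E"
    using x \<open>g0 \<in> P\<close> P(2) by (auto simp: supp_ideal_def)
  have "monom a \<notin> P"
    using ab(1) g(3) monom_mem_colon_iff_prime_exps by blast
  define f' where "f' = monom a * f - Poly_Mapping.single (a + b) (Poly_Mapping.lookup f b)"
  have "Poly_Mapping.single (a + b) (Poly_Mapping.lookup f b) \<in> supp_ideal E"
    using \<open>x \<in> E\<close> ab(3) by (simp add: supp_ideal_def)
  then have "P = {r. r * f' \<in> supp_ideal E}"
    unfolding f'_def using colon_diff_mem[OF J] prime_colon_mult[OF P \<open>monom a \<notin> P\<close>] by simp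
  moreover have "card (Poly_Mapping.keys f') < card (Poly_Mapping.keys f)"
    unfolding f'_def using ab(2) by (rule card_keys_cancel_term)
  ultimately show ?thesis by blast
qed

end

lemma Ass_supp_ideal:
  fixes E :: "('v::finite \<Rightarrow>\<^sub>0 nat) set"
  assumes E: "up_closed E"
  shows "Ass (supp_ideal E :: ('v, 'k::idom) mpoly set) = {monomial_prime A | A. \<exists>u. (+) u -` E = prime_exps A}"
proof (intro equalityI subsetI)
  fix P :: "('v, 'k) mpoly set" assume "P \<in> Ass (supp_ideal E)"
  then obtain f where "is_prime_ideal P" "P = {r. r * f \<in> supp_ideal E}"
    unfolding Ass_def by blast
  then show "P \<in> {monomial_prime A | A. \<exists>u. (+) u -` E = prime_exps A}"
  proof (induction "card (Poly_Mapping.keys f)" arbitrary: f rule: less_induct)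
    case less
    define A where "A = {i. monom (Poly_Mapping.single i 1) \<in> P}"
    note colon = E less.prems A_def
    show ?case
    proof (cases "P \<subseteq> monomial_prime A")
      case True
      then show ?thesis
        using monomial_prime_subset_prime_colon[OF colon] prime_colon_witness[OF colon] by blast
    next
      case False
      then show ?thesis
        using prime_colon_reduce[OF colon] less.hyps less.prems(1) by blast
    qed
  qed
next
  fix P :: "('v, 'k) mpoly set" assume "P \<in> {monomial_prime A | A. \<exists>u. (+) u -` E = prime_exps A}"
  then show "P \<in> Ass (supp_ideal E)"
    unfolding Ass_def using is_prime_monomial_prime monomial_prime_eq_colon by blast
qed

subsection \<open>Weights\<close>

lemma lookup_weight_exp: "Poly_Mapping.lookup (weight_exp w a) v = w v * Poly_Mapping.lookup a v"
proof -
  have "finite {v. w v * Poly_Mapping.lookup a v \<noteq> 0}"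
    by (rule finite_subset[OF _ finite_keys[of a]]) (auto simp: in_keys_iff)
  then show ?thesis by (simp add: weight_exp_def)
qed

lemma weight_exp_add: "weight_exp w (a + b) = weight_exp w a + weight_exp w b"
  by (rule poly_mapping_eqI) (simp add: lookup_weight_exp lookup_add algebra_simps)

lemma weight_exp_zero: "weight_exp w 0 = 0"
  by (rule poly_mapping_eqI) (simp add: lookup_weight_exp)

lemma keys_weight_exp: "\<forall>v. 0 < w v \<Longrightarrow> Poly_Mapping.keys (weight_exp w c) = Poly_Mapping.keys c"
  by (auto simp: in_keys_iff lookup_weight_exp)

lemma weight_exp_mem_prime_exps_iff:
  "\<forall>v. 0 < w v \<Longrightarrow> weight_exp w c \<in> prime_exps A \<longleftrightarrow> c \<in> prime_exps A"
  by (simp add: prime_exps_def keys_weight_exp)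

definition exp_div :: "('v \<Rightarrow> nat) \<Rightarrow> ('v \<Rightarrow>\<^sub>0 nat) \<Rightarrow> ('v \<Rightarrow>\<^sub>0 nat)" where
  "exp_div w e = Abs_poly_mapping (\<lambda>v. Poly_Mapping.lookup e v div w v)"

lemma lookup_exp_div: "Poly_Mapping.lookup (exp_div w e) v = Poly_Mapping.lookup e v div w v"
proof -
  have "finite {v. Poly_Mapping.lookup e v div w v \<noteq> 0}"
    by (rule finite_subset[OF _ finite_keys[of e]]) (auto simp: in_keys_iff intro!: gr0I)
  then show ?thesis by (simp add: exp_div_def)
qed

lemma exp_div_weight_exp_add:
  "\<forall>v. 0 < w v \<Longrightarrow> exp_div w (weight_exp w a + e) = a + exp_div w e"
  by (rule poly_mapping_eqI) (simp add: lookup_exp_div lookup_add lookup_weight_exp)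

lemma le_exp_decomp:
  fixes a b :: "'v \<Rightarrow>\<^sub>0 nat"
  assumes "\<And>v. Poly_Mapping.lookup b v \<le> Poly_Mapping.lookup a v"
  shows "a = b + (a - b)"
  using assms by (intro poly_mapping_eqI) (simp add: lookup_add lookup_minus)

lemma mem_weighted_exps_iff:
  assumes "up_closed E" "\<forall>v. 0 < w v"
  shows "e \<in> weight_exp w ` E + UNIV \<longleftrightarrow> exp_div w e \<in> E"
proof
  assume "e \<in> weight_exp w ` E + UNIV"
  then obtain a c where "a \<in> E" "e = weight_exp w a + c"
    by (auto elim!: set_plus_elim)
  then show "exp_div w e \<in> E"
    using assms by (simp add: exp_div_weight_exp_add up_closed_def)
next
  assume "exp_div w e \<in> E"
  moreover have "e = weight_exp w (exp_div w e) + (e - weight_exp w (exp_div w e))"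
    by (rule le_exp_decomp) (simp add: lookup_weight_exp lookup_exp_div)
  ultimately show "e \<in> weight_exp w ` E + UNIV"
    using set_plus_intro[OF imageI UNIV_I] by metis
qed

text \<open>The shift by \<open>w\<^sub>i - 1\<close> in the variables of \<open>A\<close> makes a single positive exponent \<open>c\<^sub>i\<close>
  survive the floor division by \<open>w\<^sub>i\<close>.\<close>
lemma weighted_colon_witness:
  fixes E :: "('v::finite \<Rightarrow>\<^sub>0 nat) set"
  assumes E: "up_closed E" and w: "\<forall>v. 0 < w v" and u: "(+) u -` E = prime_exps A"
  shows "\<exists>u'. (+) u' -` (weight_exp w ` E + UNIV) = prime_exps A"
proof -
  define r where "r = Abs_poly_mapping (\<lambda>i. if i \<in> A then w i - 1 else 0)"
  have lookup_r: "Poly_Mapping.lookup r i = (if i \<in> A then w i - 1 else 0)" for i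
    by (simp add: r_def)
  have "i \<in> Poly_Mapping.keys (exp_div w (r + c)) \<longleftrightarrow> i \<in> Poly_Mapping.keys c" if "i \<in> A" for i c
    using w[rule_format, of i] that by (auto simp: in_keys_iff lookup_exp_div lookup_add lookup_r div_eq_0_iff)
  then have r: "exp_div w (r + c) \<in> prime_exps A \<longleftrightarrow> c \<in> prime_exps A" for c
    unfolding prime_exps_def by blast
  have "weight_exp w u + r + c \<in> weight_exp w ` E + UNIV \<longleftrightarrow> u + exp_div w (r + c) \<in> E" for c
    using mem_weighted_exps_iff[OF E w] by (simp add: add.assoc exp_div_weight_exp_add[OF w])
  also have "\<dots> c \<longleftrightarrow> c \<in> prime_exps A" for c
    using u r by blast
  finally show ?thesis by blast
qed

lemma unweighted_colon_witness:
  assumes E: "up_closed E" and w: "\<forall>v. 0 < w v"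
    and u': "(+) u' -` (weight_exp w ` E + UNIV) = prime_exps A"
  shows "\<exists>u. (+) u -` E = prime_exps A"
proof -
  have "exp_div w u' + c \<in> E \<longleftrightarrow> c \<in> prime_exps A" for c
  proof -
    have "exp_div w (u' + weight_exp w c) = exp_div w u' + c"
      using exp_div_weight_exp_add[OF w, of c u'] by (simp add: add.commute)
    then have "exp_div w u' + c \<in> E \<longleftrightarrow> u' + weight_exp w c \<in> weight_exp w ` E + UNIV"
      using mem_weighted_exps_iff[OF E w] by simp
    also have "\<dots> \<longleftrightarrow> c \<in> prime_exps A"
      using u' weight_exp_mem_prime_exps_iff[OF w] by blast
    finally show ?thesis .
  qed
  then show ?thesis by blast
qed

lemma Ass_supp_ideal_weighted:
  fixes E :: "('v::finite \<Rightarrow>\<^sub>0 nat) set"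
  assumes E: "up_closed E" and w: "\<forall>v. 0 < w v"
  shows "Ass (supp_ideal (weight_exp w ` E + UNIV) :: ('v, 'k::idom) mpoly set) = Ass (supp_ideal E)"
proof -
  have "(\<exists>u. (+) u -` (weight_exp w ` E + UNIV) = prime_exps A) \<longleftrightarrow> (\<exists>u. (+) u -` E = prime_exps A)" for A
    using weighted_colon_witness[OF E w] unweighted_colon_witness[OF E w] by blast
  then show ?thesis
    by (simp add: Ass_supp_ideal[OF E] Ass_supp_ideal[OF up_closed_plus_UNIV])
qed

lemma sumset_power_weighted:
  "weight_exp w ` sumset_power E k + UNIV = sumset_power (weight_exp w ` E + UNIV) k"
proof (induction k)
  case 0
  have "0 \<in> weight_exp w ` UNIV"
    using weight_exp_zero by (metis UNIV_I imageI)
  then show ?case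
    using set_zero_plus2[of _ UNIV] by (simp add: top.extremum_unique)
next
  case (Suc k)
  have "UNIV + UNIV = (UNIV :: ('a \<Rightarrow>\<^sub>0 nat) set)"
    by (rule up_closed_plus_UNIV_eq[OF up_closed_UNIV])
  then have "weight_exp w ` sumset_power E (Suc k) + UNIV
      = (weight_exp w ` sumset_power E k + weight_exp w ` E) + (UNIV + UNIV)"
    by (simp add: image_set_plus[OF weight_exp_add])
  also have "\<dots> = (weight_exp w ` sumset_power E k + UNIV) + (weight_exp w ` E + UNIV)"
    by (simp only: ac_simps)
  finally show ?case by (simp add: Suc)
qed

lemma min_mon_gen_below:
  fixes I :: "('v::finite, 'k::field) mpoly set"
  assumes "monom a \<in> I"
  shows "\<exists>g\<in>min_mon_gens I. \<forall>v. Poly_Mapping.lookup g v \<le> Poly_Mapping.lookup a v"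
proof -
  let ?below = "\<lambda>b. monom b \<in> I \<and> (\<forall>v. Poly_Mapping.lookup b v \<le> Poly_Mapping.lookup a v)"
  let ?deg = "\<lambda>b. sum (Poly_Mapping.lookup b) UNIV"
  have "\<exists>g. ?below g \<and> (\<forall>b. ?below b \<longrightarrow> ?deg g \<le> ?deg b)"
    by (rule ex_has_least_nat[of _ a]) (simp add: assms)
  then obtain g where g: "?below g" and least: "\<And>b. ?below b \<Longrightarrow> ?deg g \<le> ?deg b"
    by blast
  have "b = g" if b: "monom b \<in> I" "\<forall>v. Poly_Mapping.lookup b v \<le> Poly_Mapping.lookup g v" for b
  proof -
    have "\<forall>v. Poly_Mapping.lookup b v \<le> Poly_Mapping.lookup a v"
      using b(2) g by (meson order_trans)
    with b(1) have "?deg g \<le> ?deg b"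
      by (intro least) simp
    moreover have "?deg b \<le> ?deg g"
      using b(2) by (intro sum_mono) simp
    ultimately have "?deg b = ?deg g"
      by simp
    then have "Poly_Mapping.lookup b v = Poly_Mapping.lookup g v" for v
      using sum_mono_inv[of "Poly_Mapping.lookup b" UNIV "Poly_Mapping.lookup g" v] b(2) by simp
    then show ?thesis by (rule poly_mapping_eqI)
  qed
  then have "g \<in> min_mon_gens I"
    using g by (simp add: min_mon_gens_def)
  with g show ?thesis by blast
qed

lemma weighted_ideal_eq_supp_ideal:
  fixes I :: "('v::finite, 'k::field) mpoly set"
  shows "weighted_ideal w I = supp_ideal (weight_exp w ` {a. monom a \<in> I} + UNIV)"
proof -
  let ?E = "{a. monom a \<in> I}"
  have "weight_exp w ` ?E + UNIV \<subseteq> weight_exp w ` min_mon_gens I + UNIV"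
  proof
    fix e assume "e \<in> weight_exp w ` ?E + UNIV"
    then obtain a c where "monom a \<in> I" "e = weight_exp w a + c"
      by (auto elim!: set_plus_elim)
    moreover obtain g where "g \<in> min_mon_gens I" "\<forall>v. Poly_Mapping.lookup g v \<le> Poly_Mapping.lookup a v"
      using min_mon_gen_below[OF \<open>monom a \<in> I\<close>] by blast
    ultimately have "e = weight_exp w g + (weight_exp w (a - g) + c)"
      using le_exp_decomp[where a = a and b = g] weight_exp_add[of w g "a - g"] by (simp add: add.assoc)
    with \<open>g \<in> min_mon_gens I\<close> show "e \<in> weight_exp w ` min_mon_gens I + UNIV"
      using set_plus_intro[OF imageI UNIV_I] by metis
  qed
  moreover have "min_mon_gens I \<subseteq> ?E"
    unfolding min_mon_gens_def by blast
  then have "weight_exp w ` min_mon_gens I + UNIV \<subseteq> weight_exp w ` ?E + UNIV"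
    by (intro set_plus_mono2 image_mono) auto
  moreover have "weighted_ideal w I = supp_ideal (weight_exp w ` min_mon_gens I + UNIV)"
    unfolding weighted_ideal_def ideal_gen_monoms[symmetric] by (simp add: image_image)
  ultimately show ?thesis
    by simp
qed

theorem theorem3p14:
  fixes I :: "('v::finite, 'k::field) mpoly set" and w :: "'v \<Rightarrow> nat"
  assumes "is_monomial_ideal I"
    and "\<forall>v. w v > 0"
  shows "copersistent I \<longleftrightarrow> copersistent (weighted_ideal w I)"
proof -
  define E where "E = {a. monom a \<in> I}"
  have E: "up_closed E"
    using assms(1) up_closed_monom_exps by (auto simp: E_def is_monomial_ideal_def)
  have I: "I = supp_ideal E"
    unfolding E_def by (rule monomial_ideal_eq_supp_ideal[OF assms(1)])
  have Ass_pow: "Ass (ideal_pow (weighted_ideal w I) k) = Ass (ideal_pow I k)" for k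
  proof -
    have "ideal_pow (weighted_ideal w I) k = supp_ideal (sumset_power (weight_exp w ` E + UNIV) k)"
      unfolding E_def weighted_ideal_eq_supp_ideal by (simp add: ideal_pow_supp_ideal up_closed_plus_UNIV)
    also have "\<dots> = supp_ideal (weight_exp w ` sumset_power E k + UNIV)"
      by (simp add: sumset_power_weighted)
    finally show ?thesis
      by (simp add: I Ass_supp_ideal_weighted ideal_pow_supp_ideal E up_closed_sumset_power assms(2))
  qed
  show ?thesis
    unfolding copersistent_def Ass_pow by (rule refl)
qed

end
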